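(* Let $\mathbf{A}$ be a finite algebra with $|A|>1$. Then for every integer $n>0$, \[ \lceil \log_{|A|}(n) \rceil\leq d_{\mathbf{A}}(n) \leq |A|^n \qquad\text{and}\qquad \lfloor \log_{|A|}(n) \rfloor\leq h_{\mathbf{A}}(n) \leq |A|^n . \] Hence $d_{\mathbf{A}}(n), h_{\mathbf{A}}(n)\in \Omega(\log(n))\cap 2^{O(n)}$. Moreover: (1) $d_{\mathbf{A}}(n) \in O(\log(n))$ if and only if $h_{\mathbf{A}}(n) \in 2^{\Omega(n)}$; (2) $d_{\mathbf{A}}(n) \in O(n)$ if and only if $h_{\mathbf{A}}(n) \in \Omega(n)$, and $d_{\mathbf{A}}(n) \in \Omega(n)$ if and only if $h_{\mathbf{A}}(n) \in O(n)$; (3) $d_{\mathbf{A}}(n) \in 2^{\Omega(n)}$ if and only if $h_{\mathbf{A}}(n) \in O(\log(n))$.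
   Context: For an algebra $\mathbf{A}$ and $n\in\omega=\{0,1,2,\dots\}$, $d_{\mathbf{A}}(n)$ denotes the least size of a generating set of the direct power $\mathbf{A}^n$ (the value is $\omega$ if $\mathbf{A}^n$ is not finitely generated), and $h_{\mathbf{A}}(g)$ denotes the largest $n$ such that $\mathbf{A}^n$ is generated by $g$ elements. Thus $d_{\mathbf{A}}(n)\le g$ iff $n\le h_{\mathbf{A}}(g)$. Big-O notation: $f\in O(g)$ means $|f(x)|\le M|g(x)|$ for some positive constants $M,N$ and all $x>N$; $f\in\Omega(g)$ means $|f(x)|\ge M|g(x)|$ for all $x>N$; $f\in 2^{O(n)}$ (resp. $2^{\Omega(n)}$) means $f(n)=2^{g(n)}$ with $g\in O(n)$ (resp. $g\in\Omega(n)$). *)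

theory Defs
  imports Complex_Main "HOL-Library.Landau_Symbols"
begin

definition is_algebra :: "'a set \<Rightarrow> 'f set \<Rightarrow> ('f \<Rightarrow> nat) \<Rightarrow> ('f \<Rightarrow> 'a list \<Rightarrow> 'a) \<Rightarrow> bool" where
  "is_algebra A Ops ar F \<longleftrightarrow>
     (\<forall>f\<in>Ops. \<forall>xs. length xs = ar f \<and> set xs \<subseteq> A \<longrightarrow> F f xs \<in> A)"

text \<open>Carrier of the direct power A^n: tuples represented as lists of length n.\<close>
definition pow_carrier :: "'a set \<Rightarrow> nat \<Rightarrow> 'a list set" where
  "pow_carrier A n = {xs. length xs = n \<and> set xs \<subseteq> A}"

definition pow_op :: "('f \<Rightarrow> 'a list \<Rightarrow> 'a) \<Rightarrow> nat \<Rightarrow> 'f \<Rightarrow> 'a list list \<Rightarrow> 'a list" where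
  "pow_op F n f xss = map (\<lambda>i. F f (map (\<lambda>xs. xs ! i) xss)) [0..<n]"

inductive_set pow_sg :: "'f set \<Rightarrow> ('f \<Rightarrow> nat) \<Rightarrow> ('f \<Rightarrow> 'a list \<Rightarrow> 'a) \<Rightarrow> nat \<Rightarrow> 'a list set \<Rightarrow> 'a list set"
  for Ops ar F n X where
  gen: "x \<in> X \<Longrightarrow> x \<in> pow_sg Ops ar F n X"
| op: "f \<in> Ops \<Longrightarrow> length xss = ar f \<Longrightarrow> (\<forall>xs\<in>set xss. xs \<in> pow_sg Ops ar F n X)
        \<Longrightarrow> pow_op F n f xss \<in> pow_sg Ops ar F n X"

definition gen_by :: "'a set \<Rightarrow> 'f set \<Rightarrow> ('f \<Rightarrow> nat) \<Rightarrow> ('f \<Rightarrow> 'a list \<Rightarrow> 'a) \<Rightarrow> nat \<Rightarrow> nat \<Rightarrow> bool" where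
  "gen_by A Ops ar F g n \<longleftrightarrow>
     (\<exists>X. X \<subseteq> pow_carrier A n \<and> finite X \<and> card X \<le> g \<and> pow_sg Ops ar F n X = pow_carrier A n)"

text \<open>d_A(n): least size of a generating set of A^n (finite since A is finite).\<close>
definition d_fun :: "'a set \<Rightarrow> 'f set \<Rightarrow> ('f \<Rightarrow> nat) \<Rightarrow> ('f \<Rightarrow> 'a list \<Rightarrow> 'a) \<Rightarrow> nat \<Rightarrow> nat" where
  "d_fun A Ops ar F n = (LEAST g. gen_by A Ops ar F g n)"

definition h_fun :: "'a set \<Rightarrow> 'f set \<Rightarrow> ('f \<Rightarrow> nat) \<Rightarrow> ('f \<Rightarrow> 'a list \<Rightarrow> 'a) \<Rightarrow> nat \<Rightarrow> nat" where
  "h_fun A Ops ar F g = (GREATEST n. gen_by A Ops ar F g n)"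

text \<open>f \<in> 2^{O(n)} and f \<in> 2^{\<Omega>(n)}: f(n) = 2^{g(n)} (for all large n) with g \<in> O(n), resp. \<Omega>(n).\<close>
definition exp_bigo :: "(nat \<Rightarrow> real) \<Rightarrow> bool" where
  "exp_bigo f \<longleftrightarrow> (\<exists>g. g \<in> O(\<lambda>n. real n) \<and> (\<forall>\<^sub>F n in at_top. f n = 2 powr g n))"

definition exp_bigomega :: "(nat \<Rightarrow> real) \<Rightarrow> bool" where
  "exp_bigomega f \<longleftrightarrow> (\<exists>g. g \<in> \<Omega>(\<lambda>n. real n) \<and> (\<forall>\<^sub>F n in at_top. f n = 2 powr g n))"

end

theory Submission
  imports Defs "HOL-Library.FuncSet" "HOL-Library.Log_Nat" "HOL-Real_Asymp.Real_Asymp"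
begin

(* If all g generators of a subuniverse of A^n agree in two coordinates, so does every element
   they generate. The columns of g generators range over A^g, so for n > |A|^g two of them
   coincide and the generated subuniverse misses a tuple: hence n <= |A|^d(n), while A^n
   trivially generates itself, so d(n) <= |A|^n. Projecting onto the first m coordinates shows
   that A^m is g-generated whenever A^n is, for m <= n; thus d(n) <= g iff n <= h(g), and the
   bounds on h follow from those on d.

   Every asymptotic equivalence transfers a growth bound of one of d, h into the inverse bound
   of the other. Weakening the Galois connection by one unit of rounding on each side makes it
   symmetric in d and h, so the statements with O and Omega swapped in (2) and (3) are the
   same transfers with the roles of d and h exchanged. *)

section \<open>Generating sets of direct powers\<close>

lemma pow_sg_subset_pow_carrier:
  assumes alg: "is_algebra A Ops ar F" and X: "X \<subseteq> pow_carrier A n"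
  shows "pow_sg Ops ar F n X \<subseteq> pow_carrier A n"
proof
  fix y assume "y \<in> pow_sg Ops ar F n X"
  then show "y \<in> pow_carrier A n"
  proof induction
    case (gen x)
    then show ?case using X by auto
  next
    case (op f xss)
    have "F f (map (\<lambda>xs. xs ! i) xss) \<in> A" if "i < n" for i
    proof -
      have "set (map (\<lambda>xs. xs ! i) xss) \<subseteq> A"
        using op(3) that by (auto simp: pow_carrier_def) (metis nth_mem subset_iff)
      then show ?thesis using alg op(1,2) unfolding is_algebra_def by auto
    qed
    then show ?case by (auto simp: pow_carrier_def pow_op_def)
  qed
qed

lemma gen_by_mono: "g \<le> g' \<Longrightarrow> gen_by A Ops ar F g n \<Longrightarrow> gen_by A Ops ar F g' n"
  unfolding gen_by_def by (meson order_trans)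

lemma gen_by_pow_carrier:
  assumes alg: "is_algebra A Ops ar F" and fin: "finite A"
  shows "gen_by A Ops ar F (card A ^ n) n"
proof -
  have eq: "pow_carrier A n = {xs. set xs \<subseteq> A \<and> length xs = n}"
    by (auto simp: pow_carrier_def)
  have "pow_sg Ops ar F n (pow_carrier A n) = pow_carrier A n"
    using pow_sg_subset_pow_carrier[OF alg order_refl] by (auto intro: pow_sg.gen)
  then show ?thesis
    unfolding gen_by_def
    by (intro exI[of _ "pow_carrier A n"])
       (simp add: eq finite_lists_length_eq[OF fin] card_lists_length_eq[OF fin])
qed

lemma pow_sg_nth_eq:
  assumes "i < n" "j < n" "\<forall>x\<in>X. x ! i = x ! j" "y \<in> pow_sg Ops ar F n X"
  shows "y ! i = y ! j"
  using assms(4)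
proof induction
  case (gen x)
  then show ?case using assms(3) by blast
next
  case (op f xss)
  then have "map (\<lambda>xs. xs ! i) xss = map (\<lambda>xs. xs ! j) xss" by simp
  then show ?case using assms(1,2) by (simp add: pow_op_def del: map_eq_conv)
qed

lemma gen_by_le_card_power:
  assumes fin: "finite A" and card: "card A > 1" and gen: "gen_by A Ops ar F g n"
  shows "n \<le> card A ^ g"
proof (rule ccontr)
  assume "\<not> n \<le> card A ^ g"
  obtain X where X: "X \<subseteq> pow_carrier A n" "finite X" "card X \<le> g"
    "pow_sg Ops ar F n X = pow_carrier A n"
    using gen unfolding gen_by_def by blast
  define column where "column i = (\<lambda>x\<in>X. x ! i)" for i
  have "column ` {..<n} \<subseteq> X \<rightarrow>\<^sub>E A"
    using X(1) by (auto simp: column_def pow_carrier_def subset_iff)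
  moreover have "card (X \<rightarrow>\<^sub>E A) \<le> card A ^ g"
    using X(2,3) card by (simp add: card_PiE power_increasing)
  ultimately have "\<not> inj_on column {..<n}"
    using \<open>\<not> n \<le> card A ^ g\<close> card_inj_on_le[of column "{..<n}" "X \<rightarrow>\<^sub>E A"] fin X(2)
    by (auto simp: finite_PiE)
  then obtain i j where ij: "i < n" "j < n" "i \<noteq> j" "column i = column j"
    unfolding inj_on_def by auto
  have same: "y ! i = y ! j" if "y \<in> pow_carrier A n" for y
  proof (rule pow_sg_nth_eq[OF ij(1,2)])
    show "\<forall>x\<in>X. x ! i = x ! j"
      using ij(4) by (metis column_def restrict_apply')
    show "y \<in> pow_sg Ops ar F n X" using that X(4) by simp
  qed
  obtain a b where ab: "a \<in> A" "b \<in> A" "a \<noteq> b"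
    using card by (metis One_nat_def card_le_Suc0_iff_eq fin not_le)
  have "(replicate n a)[i := b] \<in> pow_carrier A n"
    using ab set_update_subset_insert[of "replicate n a" i b] by (auto simp: pow_carrier_def)
  then show False
    using same ij ab by fastforce
qed

lemma take_pow_op:
  "m \<le> n \<Longrightarrow> take m (pow_op F n f xss) = pow_op F m f (map (take m) xss)"
  by (auto simp: pow_op_def take_map comp_def intro!: map_cong)

lemma take_mem_pow_sg:
  assumes "y \<in> pow_sg Ops ar F n X" "m \<le> n"
  shows "take m y \<in> pow_sg Ops ar F m (take m ` X)"
  using assms(1)
proof induction
  case (gen x)
  then show ?case by (auto intro: pow_sg.gen)
next
  case (op f xss)
  then show ?case
    unfolding take_pow_op[OF assms(2)] by (intro pow_sg.op) auto
qed

lemma gen_by_take: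
  assumes alg: "is_algebra A Ops ar F" and ne: "A \<noteq> {}"
    and gen: "gen_by A Ops ar F g n" and mn: "m \<le> n"
  shows "gen_by A Ops ar F g m"
proof -
  obtain X where X: "X \<subseteq> pow_carrier A n" "finite X" "card X \<le> g"
    "pow_sg Ops ar F n X = pow_carrier A n"
    using gen unfolding gen_by_def by blast
  have Y: "take m ` X \<subseteq> pow_carrier A m"
    using X(1) mn by (auto simp: pow_carrier_def dest: set_take_subset[THEN subsetD])
  have "pow_carrier A m \<subseteq> pow_sg Ops ar F m (take m ` X)"
  proof
    fix z assume z: "z \<in> pow_carrier A m"
    obtain a where "a \<in> A" using ne by auto
    then have "z @ replicate (n - m) a \<in> pow_sg Ops ar F n X"
      using z mn X(4) by (auto simp: pow_carrier_def)
    from take_mem_pow_sg[OF this mn] show "z \<in> pow_sg Ops ar F m (take m ` X)"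
      using z by (simp add: pow_carrier_def)
  qed
  with pow_sg_subset_pow_carrier[OF alg Y]
  have "pow_sg Ops ar F m (take m ` X) = pow_carrier A m" by blast
  moreover have "card (take m ` X) \<le> g" using X(3) card_image_le[OF X(2), of "take m"] by linarith
  ultimately show ?thesis unfolding gen_by_def using Y X(2) by blast
qed

lemma d_fun_le_iff:
  assumes alg: "is_algebra A Ops ar F" and fin: "finite A"
  shows "d_fun A Ops ar F n \<le> g \<longleftrightarrow> gen_by A Ops ar F g n"
proof
  have "gen_by A Ops ar F (d_fun A Ops ar F n) n"
    unfolding d_fun_def by (rule LeastI[of "\<lambda>g. gen_by A Ops ar F g n", OF gen_by_pow_carrier[OF alg fin]])
  then show "d_fun A Ops ar F n \<le> g \<Longrightarrow> gen_by A Ops ar F g n" by (rule gen_by_mono[rotated])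
next
  show "gen_by A Ops ar F g n \<Longrightarrow> d_fun A Ops ar F n \<le> g"
    unfolding d_fun_def by (rule Least_le)
qed

(* Without nullary operations A^0 is not generated by the empty set, and h_fun A Ops ar F 0 is
   then the junk value of GREATEST on an empty predicate. *)
lemma le_h_fun_iff:
  assumes alg: "is_algebra A Ops ar F" and fin: "finite A" and card: "card A > 1"
    and g: "0 < g"
  shows "n \<le> h_fun A Ops ar F g \<longleftrightarrow> gen_by A Ops ar F g n"
proof -
  have bounded: "\<And>m. gen_by A Ops ar F g m \<Longrightarrow> m \<le> card A ^ g"
    using gen_by_le_card_power[OF fin card] .
  have "gen_by A Ops ar F g 0"
    using gen_by_mono[OF _ gen_by_pow_carrier[OF alg fin, of 0]] g by simp
  then have "gen_by A Ops ar F g (h_fun A Ops ar F g)"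
    unfolding h_fun_def using bounded by (rule GreatestI_nat)
  moreover have "A \<noteq> {}" using card by auto
  ultimately show ?thesis
    using gen_by_take[OF alg] Greatest_le_nat[OF _ bounded] unfolding h_fun_def by blast
qed

lemma d_fun_le_iff_le_h_fun:
  assumes "is_algebra A Ops ar F" "finite A" "card A > 1" "0 < g"
  shows "d_fun A Ops ar F n \<le> g \<longleftrightarrow> n \<le> h_fun A Ops ar F g"
  using d_fun_le_iff[OF assms(1,2)] le_h_fun_iff[OF assms] by blast

lemma le_card_power_d_fun:
  assumes "is_algebra A Ops ar F" "finite A" "card A > 1"
  shows "n \<le> card A ^ d_fun A Ops ar F n"
  using gen_by_le_card_power[OF assms(2,3)] d_fun_le_iff[OF assms(1,2)] by blast

lemma d_fun_le_card_power:
  assumes "is_algebra A Ops ar F" "finite A"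
  shows "d_fun A Ops ar F n \<le> card A ^ n"
  using d_fun_le_iff[OF assms] gen_by_pow_carrier[OF assms] by blast

lemma h_fun_le_card_power:
  assumes "is_algebra A Ops ar F" "finite A" "card A > 1" "0 < g"
  shows "h_fun A Ops ar F g \<le> card A ^ g"
  using gen_by_le_card_power[OF assms(2,3)] le_h_fun_iff[OF assms] by blast

lemma less_card_power_Suc_h_fun:
  assumes "is_algebra A Ops ar F" "finite A" "card A > 1" "0 < g"
  shows "g < card A ^ Suc (h_fun A Ops ar F g)"
proof (rule ccontr)
  let ?m = "Suc (h_fun A Ops ar F g)"
  assume "\<not> g < card A ^ ?m"
  then have "d_fun A Ops ar F ?m \<le> g"
    using d_fun_le_card_power[OF assms(1,2), of ?m] by linarith
  then show False
    using d_fun_le_iff_le_h_fun[OF assms] by simp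
qed

section \<open>Logarithms and exponential growth classes\<close>

lemma ceiling_log_le_if_le_power:
  assumes "1 < b" "0 < n" "n \<le> b ^ k"
  shows "\<lceil>log (real b) (real n)\<rceil> \<le> int k"
  using assms by (simp add: ceiling_le_iff log_le_iff powr_realpow flip: of_nat_power)

lemma floor_log_le_if_less_power:
  assumes "1 < b" "0 < n" "n < b ^ Suc k"
  shows "\<lfloor>log (real b) (real n)\<rfloor> \<le> int k"
proof -
  have "real b powr (real k + 1) = real (b ^ Suc k)"
    using powr_realpow[of "real b" "Suc k"] assms(1) by (simp add: add.commute)
  then have "real n < real b powr (real k + 1)"
    using assms(3) by linarith
  then show ?thesis
    using assms by (simp add: floor_le_iff log_less_iff)
qed

lemma half_quotient_le_div:
  fixes g K :: nat
  assumes "0 < K" "K \<le> g"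
  shows "real g / (2 * real K) \<le> real (g div K)"
proof -
  have "0 < g div K" using assms by (simp add: div_greater_zero_iff)
  then have "K \<le> K * (g div K)" by simp
  moreover have "g = K * (g div K) + g mod K" by simp
  moreover have "g mod K < K" using assms(1) by simp
  ultimately have "g \<le> 2 * K * (g div K)" by linarith
  then have "real g \<le> 2 * real K * real (g div K)" by (metis of_nat_le_iff of_nat_mult of_nat_numeral)
  then show ?thesis using assms(1) by (simp add: field_simps)
qed

lemma filterlim_floorlog_at_top: "1 < b \<Longrightarrow> filterlim (floorlog b) at_top at_top"
  unfolding filterlim_at_top
proof
  fix Z assume "1 < b"
  show "\<forall>\<^sub>F n in at_top. Z \<le> floorlog b n"
    using eventually_ge_at_top[of "b ^ Z"]
  proof eventually_elim
    case (elim n)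
    have "b ^ (Z - 1) \<le> b ^ Z" using \<open>1 < b\<close> by (simp add: power_increasing)
    then have "b ^ (Z - 1) \<le> n" using elim by (rule order_trans)
    then show ?case using \<open>1 < b\<close> by (rule floorlog_geI)
  qed
qed

lemma exp_bigo_if_le_power:
  fixes f :: "nat \<Rightarrow> nat"
  assumes "\<forall>\<^sub>F n in at_top. 0 < f n \<and> f n \<le> b ^ n"
  shows "exp_bigo (\<lambda>n. real (f n))"
  unfolding exp_bigo_def
proof (intro exI conjI)
  show "\<forall>\<^sub>F n in at_top. real (f n) = 2 powr log 2 (real (f n))"
    using assms by eventually_elim simp
  have "\<forall>\<^sub>F n in at_top. norm (log 2 (real (f n))) \<le> log 2 (real b) * norm (real n)"
    using assms eventually_gt_at_top[of 0]
  proof eventually_elim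
    case (elim n)
    then have "0 < b" by (metis gr0I less_le_trans power_0_left)
    have "log 2 (real (f n)) \<le> log 2 (real b ^ n)"
      using elim \<open>0 < b\<close> by (simp flip: of_nat_power)
    also have "\<dots> = log 2 (real b) * real n" by (simp add: log_nat_power)
    finally show ?case using elim by simp
  qed
  then show "(\<lambda>n. log 2 (real (f n))) \<in> O(\<lambda>n. real n)" by (rule bigoI)
qed

lemma exp_bigomega_nat_iff:
  fixes f :: "nat \<Rightarrow> nat"
  shows "exp_bigomega (\<lambda>n. real (f n)) \<longleftrightarrow>
    (\<exists>c>0. \<forall>\<^sub>F n in at_top. 2 powr (c * real n) \<le> real (f n))"
proof
  assume "exp_bigomega (\<lambda>n. real (f n))"
  then obtain G c where "c > 0" and G: "\<forall>\<^sub>F n in at_top. c * norm (real n) \<le> norm (G n)"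
    and f: "\<forall>\<^sub>F n in at_top. real (f n) = 2 powr G n"
    unfolding exp_bigomega_def by (auto elim!: landau_omega.bigE)
  have "\<forall>\<^sub>F n in at_top. 2 powr (c * real n) \<le> real (f n)"
    using G f
  proof eventually_elim
    case (elim n)
    then have "0 < real (f n)" by simp
    then have "1 \<le> f n" by simp
    then have "2 powr 0 \<le> 2 powr G n" by (simp flip: elim(2))
    then have "0 \<le> G n" by (simp only: powr_le_cancel_iff)
    then show ?case using elim by simp
  qed
  with \<open>c > 0\<close> show "\<exists>c>0. \<forall>\<^sub>F n in at_top. 2 powr (c * real n) \<le> real (f n)" by blast
next
  assume "\<exists>c>0. \<forall>\<^sub>F n in at_top. 2 powr (c * real n) \<le> real (f n)"
  then obtain c where "c > 0" and f: "\<forall>\<^sub>F n in at_top. 2 powr (c * real n) \<le> real (f n)"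
    by blast
  have pos: "\<forall>\<^sub>F n in at_top. 0 < real (f n)"
    using f by eventually_elim (smt (verit) powr_gt_zero)
  have "\<forall>\<^sub>F n in at_top. c * norm (real n) \<le> norm (log 2 (real (f n)))"
    using f pos
  proof eventually_elim
    case (elim n)
    then have "c * real n \<le> log 2 (real (f n))" by (simp add: le_log_iff)
    then show ?case using \<open>c > 0\<close> by simp
  qed
  then have "(\<lambda>n. log 2 (real (f n))) \<in> \<Omega>(\<lambda>n. real n)"
    by (rule landau_omega.bigI[OF \<open>c > 0\<close>])
  moreover have "\<forall>\<^sub>F n in at_top. real (f n) = 2 powr log 2 (real (f n))"
    using pos by eventually_elim simp
  ultimately show "exp_bigomega (\<lambda>n. real (f n))" unfolding exp_bigomega_def by blast
qed

lemma bigomega_ln_if_floor_log_le: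
  fixes f :: "nat \<Rightarrow> nat"
  assumes "1 < b" and "\<forall>\<^sub>F n in at_top. \<lfloor>log b (real n)\<rfloor> \<le> int (f n)"
  shows "(\<lambda>n. real (f n)) \<in> \<Omega>(\<lambda>n. ln (real n))"
proof -
  have "\<forall>\<^sub>F n in at_top. 1 \<le> log b (real n)" using \<open>1 < b\<close> by real_asymp
  with assms(2) have "\<forall>\<^sub>F n in at_top. norm (log b (real n) - 1) \<le> norm (real (f n))"
    by eventually_elim (simp add: floor_le_iff abs_if)
  then have "(\<lambda>n. real (f n)) \<in> \<Omega>(\<lambda>n. log b (real n) - 1)"
    by (rule landau_omega.big_mono)
  also have "(\<lambda>n. log b (real n) - 1) \<in> \<Omega>(\<lambda>n. ln (real n))" using \<open>1 < b\<close> by real_asymp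
  finally show ?thesis .
qed

section \<open>Weak Galois connections\<close>

definition weak_galois :: "(nat \<Rightarrow> nat) \<Rightarrow> (nat \<Rightarrow> nat) \<Rightarrow> bool" where
  "weak_galois L U \<longleftrightarrow>
     (\<forall>n g. 0 < n \<longrightarrow> 0 < g \<longrightarrow> (L n < g \<longrightarrow> n \<le> U g) \<and> (n < U g \<longrightarrow> L n \<le> g))"

lemma weak_galois_commute: "weak_galois L U \<Longrightarrow> weak_galois U L"
  unfolding weak_galois_def by (meson not_le)

lemma weak_galois_upper_ge_if_lower_linear:
  assumes wg: "weak_galois L U"
    and L: "\<forall>\<^sub>F k in at_top. 0 < s k \<and> real (L (s k)) \<le> c * real k"
  shows "\<exists>K>0. \<forall>\<^sub>F g in at_top. s (g div K) \<le> U g"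
proof -
  define K where "K = nat \<lceil>c\<rceil> + 1"
  have "0 < K" "c < real K" unfolding K_def by linarith+
  have "\<forall>\<^sub>F g in at_top. 0 < g div K \<and> 0 < s (g div K) \<and> real (L (s (g div K))) \<le> c * real (g div K)"
    using eventually_compose_filterlim[OF eventually_conj[OF eventually_gt_at_top[of 0] L]
        filterlim_at_top_div_const_nat[OF \<open>0 < K\<close>]] .
  then have "\<forall>\<^sub>F g in at_top. s (g div K) \<le> U g"
    using eventually_gt_at_top[of 0]
  proof eventually_elim
    case (elim g)
    have "real (L (s (g div K))) < real K * real (g div K)"
      using elim \<open>c < real K\<close> by (smt (verit) mult_strict_right_mono of_nat_0_less_iff)
    also have "\<dots> \<le> real g" by (metis of_nat_le_iff of_nat_mult times_div_less_eq_dividend)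
    finally show ?case using elim wg unfolding weak_galois_def by auto
  qed
  with \<open>0 < K\<close> show ?thesis by blast
qed

lemma weak_galois_lower_le_if_upper_ge:
  assumes wg: "weak_galois L U" and "0 < K"
    and U: "\<forall>\<^sub>F j in at_top. s j \<le> U (K * j)"
    and \<sigma>: "filterlim \<sigma> at_top at_top" and s\<sigma>: "\<forall>\<^sub>F n in at_top. n < s (\<sigma> n)"
  shows "\<forall>\<^sub>F n in at_top. L n \<le> K * \<sigma> n"
proof -
  have "\<forall>\<^sub>F n in at_top. 0 < \<sigma> n \<and> s (\<sigma> n) \<le> U (K * \<sigma> n)"
    using eventually_compose_filterlim[OF eventually_conj[OF eventually_gt_at_top[of 0] U] \<sigma>] .
  with s\<sigma> eventually_gt_at_top[of 0] show ?thesis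
    by eventually_elim (use wg \<open>0 < K\<close> in \<open>auto simp: weak_galois_def\<close>)
qed

lemma weak_galois_bigo_imp_bigomega:
  assumes wg: "weak_galois L U" and "(\<lambda>n. real (L n)) \<in> O(\<lambda>n. real n)"
  shows "(\<lambda>n. real (U n)) \<in> \<Omega>(\<lambda>n. real n)"
proof -
  obtain c where "\<forall>\<^sub>F k in at_top. real (L k) \<le> c * real k"
    using assms(2) by (auto elim!: landau_o.bigE)
  then have "\<forall>\<^sub>F k in at_top. 0 < k \<and> real (L k) \<le> c * real k"
    using eventually_gt_at_top[of 0] by eventually_elim simp
  then obtain K where "0 < K" and U: "\<forall>\<^sub>F g in at_top. g div K \<le> U g"
    using weak_galois_upper_ge_if_lower_linear[OF wg, where s = "\<lambda>k. k"] by auto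
  have "\<forall>\<^sub>F g in at_top. 1 / (2 * real K) * norm (real g) \<le> norm (real (U g))"
    using U eventually_ge_at_top[of K]
  proof eventually_elim
    case (elim g)
    then show ?case using half_quotient_le_div[OF \<open>0 < K\<close> elim(2)] by simp
  qed
  then show ?thesis using \<open>0 < K\<close> by (intro landau_omega.bigI[of "1 / (2 * real K)"]) auto
qed

lemma weak_galois_bigomega_imp_bigo:
  assumes wg: "weak_galois L U" and "(\<lambda>n. real (U n)) \<in> \<Omega>(\<lambda>n. real n)"
  shows "(\<lambda>n. real (L n)) \<in> O(\<lambda>n. real n)"
proof -
  obtain c where "c > 0" and c: "\<forall>\<^sub>F g in at_top. c * real g \<le> real (U g)"
    using assms(2) by (auto elim!: landau_omega.bigE)
  define K where "K = nat \<lceil>2 / c\<rceil>"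
  have cK: "2 \<le> c * real K"
  proof -
    have "2 / c \<le> real K" unfolding K_def by (rule real_nat_ceiling_ge)
    then show ?thesis using \<open>c > 0\<close> by (simp add: field_simps)
  qed
  then have "0 < K" by (cases K) auto
  have "\<forall>\<^sub>F j in at_top. 2 * j \<le> U (K * j)"
    using eventually_compose_filterlim[OF c mult_nat_left_at_top[OF \<open>0 < K\<close>]]
  proof eventually_elim
    case (elim j)
    have "real (2 * j) \<le> c * real K * real j" using cK by (simp add: mult_right_mono)
    with elim show ?case by (simp add: mult.assoc)
  qed
  moreover have "\<forall>\<^sub>F n in at_top. (n::nat) < 2 * n"
    using eventually_gt_at_top[of 0] by eventually_elim simp
  ultimately have "\<forall>\<^sub>F n in at_top. L n \<le> K * n"
    using weak_galois_lower_le_if_upper_ge[OF wg \<open>0 < K\<close> _ filterlim_ident] by blast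
  then show ?thesis by (intro bigoI[of _ "real K"]) (auto elim!: eventually_mono simp flip: of_nat_mult)
qed

lemma weak_galois_bigo_ln_imp_exp_bigomega:
  assumes wg: "weak_galois L U" and "(\<lambda>n. real (L n)) \<in> O(\<lambda>n. ln (real n))"
  shows "exp_bigomega (\<lambda>n. real (U n))"
proof -
  obtain c where c: "\<forall>\<^sub>F n in at_top. real (L n) \<le> c * norm (ln (real n))"
    using assms(2) by (auto elim!: landau_o.bigE)
  have "filterlim (\<lambda>k. (2::nat) ^ k) at_top at_top"
    by (rule filterlim_subseq) (simp add: strict_mono_def)
  from eventually_compose_filterlim[OF c this]
  have "\<forall>\<^sub>F k in at_top. 0 < (2::nat) ^ k \<and> real (L (2 ^ k)) \<le> (c * ln 2) * real k"
    by eventually_elim (simp add: ln_realpow mult_ac)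
  then obtain K where "0 < K" and U: "\<forall>\<^sub>F g in at_top. 2 ^ (g div K) \<le> U g"
    using weak_galois_upper_ge_if_lower_linear[OF wg, where s = "\<lambda>k. 2 ^ k"] by auto
  have "\<forall>\<^sub>F g in at_top. 2 powr (1 / (2 * real K) * real g) \<le> real (U g)"
    using U eventually_ge_at_top[of K]
  proof eventually_elim
    case (elim g)
    have "2 powr (1 / (2 * real K) * real g) \<le> 2 powr real (g div K)"
      using half_quotient_le_div[OF \<open>0 < K\<close> elim(2)] by simp
    also have "\<dots> \<le> real (U g)"
      using elim(1) by (simp add: powr_realpow flip: of_nat_power)
    finally show ?case .
  qed
  then show ?thesis
    using \<open>0 < K\<close> unfolding exp_bigomega_nat_iff by (intro exI[of _ "1 / (2 * real K)"]) auto
qed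

lemma weak_galois_exp_bigomega_imp_bigo_ln:
  assumes wg: "weak_galois L U" and "exp_bigomega (\<lambda>n. real (U n))"
  shows "(\<lambda>n. real (L n)) \<in> O(\<lambda>n. ln (real n))"
proof -
  obtain c where "c > 0" and c: "\<forall>\<^sub>F g in at_top. 2 powr (c * real g) \<le> real (U g)"
    using assms(2) unfolding exp_bigomega_nat_iff by blast
  define K where "K = nat \<lceil>1 / c\<rceil>"
  have cK: "1 \<le> c * real K"
  proof -
    have "1 / c \<le> real K" unfolding K_def by (rule real_nat_ceiling_ge)
    then show ?thesis using \<open>c > 0\<close> by (simp add: field_simps)
  qed
  then have "0 < K" by (cases K) auto
  have "\<forall>\<^sub>F j in at_top. 2 ^ j \<le> U (K * j)"
    using eventually_compose_filterlim[OF c mult_nat_left_at_top[OF \<open>0 < K\<close>]]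
  proof eventually_elim
    case (elim j)
    have "real (2 ^ j) = 2 powr real j" by (simp add: powr_realpow)
    also have "\<dots> \<le> 2 powr (c * real (K * j))"
      using mult_right_mono[OF cK, of "real j"] by (simp add: mult.assoc)
    also have "\<dots> \<le> real (U (K * j))" by (rule elim)
    finally show ?case by (simp only: of_nat_le_iff)
  qed
  moreover have "\<forall>\<^sub>F n in at_top. n < 2 ^ floorlog 2 n"
    using eventually_gt_at_top[of 0] by eventually_elim (simp add: floorlog_bounds)
  ultimately have "\<forall>\<^sub>F n in at_top. L n \<le> K * floorlog 2 n"
    using weak_galois_lower_le_if_upper_ge[OF wg \<open>0 < K\<close> _ filterlim_floorlog_at_top] by simp
  then have "\<forall>\<^sub>F n in at_top. norm (real (L n)) \<le> norm (real K * (log 2 (real n) + 1))"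
    using eventually_gt_at_top[of 0]
  proof eventually_elim
    case (elim n)
    have "real (floorlog 2 n) \<le> log 2 (real n) + 1" using elim(2) by (simp add: floorlog_def)
    then have "real (L n) \<le> real K * (log 2 (real n) + 1)"
      using elim(1) by (smt (verit) mult_left_mono of_nat_0_le_iff of_nat_le_iff of_nat_mult)
    then show ?case using elim(2) by simp
  qed
  then have "(\<lambda>n. real (L n)) \<in> O(\<lambda>n. real K * (log 2 (real n) + 1))"
    by (rule landau_o.big_mono)
  also have "(\<lambda>n. real K * (log 2 (real n) + 1)) \<in> O(\<lambda>n. ln (real n))"
    using \<open>0 < K\<close> by real_asymp
  finally show ?thesis .
qed

section \<open>Growth of d and h\<close>

lemma weak_galois_d_fun_h_fun:
  assumes "is_algebra A Ops ar F" "finite A" "card A > 1"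
  shows "weak_galois (d_fun A Ops ar F) (h_fun A Ops ar F)"
  using d_fun_le_iff_le_h_fun[OF assms] unfolding weak_galois_def by (meson less_imp_le)

lemma ceiling_log_le_d_fun:
  assumes "is_algebra A Ops ar F" "finite A" "card A > 1" "0 < n"
  shows "\<lceil>log (real (card A)) (real n)\<rceil> \<le> int (d_fun A Ops ar F n)"
  using ceiling_log_le_if_le_power[OF assms(3,4) le_card_power_d_fun[OF assms(1-3)]] .

lemma floor_log_le_h_fun:
  assumes "is_algebra A Ops ar F" "finite A" "card A > 1" "0 < g"
  shows "\<lfloor>log (real (card A)) (real g)\<rfloor> \<le> int (h_fun A Ops ar F g)"
  using floor_log_le_if_less_power[OF assms(3,4) less_card_power_Suc_h_fun[OF assms]] .

lemma bigomega_ln_d_fun: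
  assumes "is_algebra A Ops ar F" "finite A" "card A > 1"
  shows "(\<lambda>n. real (d_fun A Ops ar F n)) \<in> \<Omega>(\<lambda>n. ln (real n))"
proof (rule bigomega_ln_if_floor_log_le)
  show "1 < real (card A)" using assms(3) by simp
  show "\<forall>\<^sub>F n in at_top. \<lfloor>log (real (card A)) (real n)\<rfloor> \<le> int (d_fun A Ops ar F n)"
    using eventually_gt_at_top[of 0]
    by eventually_elim (use ceiling_log_le_d_fun[OF assms] floor_le_ceiling order_trans in blast)
qed

lemma bigomega_ln_h_fun:
  assumes "is_algebra A Ops ar F" "finite A" "card A > 1"
  shows "(\<lambda>g. real (h_fun A Ops ar F g)) \<in> \<Omega>(\<lambda>g. ln (real g))"
proof (rule bigomega_ln_if_floor_log_le)
  show "1 < real (card A)" using assms(3) by simp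
  show "\<forall>\<^sub>F g in at_top. \<lfloor>log (real (card A)) (real g)\<rfloor> \<le> int (h_fun A Ops ar F g)"
    using eventually_gt_at_top[of 0] by eventually_elim (rule floor_log_le_h_fun[OF assms])
qed

lemma exp_bigo_d_fun:
  assumes "is_algebra A Ops ar F" "finite A" "card A > 1"
  shows "exp_bigo (\<lambda>n. real (d_fun A Ops ar F n))"
proof (rule exp_bigo_if_le_power)
  show "\<forall>\<^sub>F n in at_top. 0 < d_fun A Ops ar F n \<and> d_fun A Ops ar F n \<le> card A ^ n"
    using eventually_ge_at_top[of 2]
  proof eventually_elim
    case (elim n)
    then show ?case
      using le_card_power_d_fun[OF assms, of n] d_fun_le_card_power[OF assms(1,2), of n]
      by (cases "d_fun A Ops ar F n") auto
  qed
qed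

lemma exp_bigo_h_fun:
  assumes "is_algebra A Ops ar F" "finite A" "card A > 1"
  shows "exp_bigo (\<lambda>g. real (h_fun A Ops ar F g))"
proof (rule exp_bigo_if_le_power)
  show "\<forall>\<^sub>F g in at_top. 0 < h_fun A Ops ar F g \<and> h_fun A Ops ar F g \<le> card A ^ g"
    using eventually_ge_at_top[of "card A"]
  proof eventually_elim
    case (elim g)
    then have "0 < g" using assms(3) by linarith
    then show ?case
      using d_fun_le_card_power[OF assms(1,2), of 1] d_fun_le_iff_le_h_fun[OF assms \<open>0 < g\<close>, of 1]
        h_fun_le_card_power[OF assms \<open>0 < g\<close>] elim
      by simp
  qed
qed

theorem theorem2p2:
  fixes A :: "'a set" and Ops :: "'f set" and ar :: "'f \<Rightarrow> nat"
    and F :: "'f \<Rightarrow> 'a list \<Rightarrow> 'a"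
  assumes alg: "is_algebra A Ops ar F"
    and fin: "finite A" and card: "card A > 1"
  defines "d \<equiv> (\<lambda>n. real (d_fun A Ops ar F n))"
    and "h \<equiv> (\<lambda>n. real (h_fun A Ops ar F n))"
  shows "(\<forall>n::nat. n > 0 \<longrightarrow>
            \<lceil>log (real (card A)) (real n)\<rceil> \<le> int (d_fun A Ops ar F n)
          \<and> d_fun A Ops ar F n \<le> card A ^ n
          \<and> \<lfloor>log (real (card A)) (real n)\<rfloor> \<le> int (h_fun A Ops ar F n)
          \<and> h_fun A Ops ar F n \<le> card A ^ n)
    \<and> d \<in> \<Omega>(\<lambda>n. ln (real n)) \<and> exp_bigo d
    \<and> h \<in> \<Omega>(\<lambda>n. ln (real n)) \<and> exp_bigo h
    \<and> (d \<in> O(\<lambda>n. ln (real n)) \<longleftrightarrow> exp_bigomega h)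
    \<and> (d \<in> O(\<lambda>n. real n) \<longleftrightarrow> h \<in> \<Omega>(\<lambda>n. real n))
    \<and> (d \<in> \<Omega>(\<lambda>n. real n) \<longleftrightarrow> h \<in> O(\<lambda>n. real n))
    \<and> (exp_bigomega d \<longleftrightarrow> h \<in> O(\<lambda>n. ln (real n)))"
proof -
  note galois = weak_galois_d_fun_h_fun[OF alg fin card]
  note galois' = weak_galois_commute[OF galois]
  show ?thesis
    unfolding d_def h_def
    using ceiling_log_le_d_fun[OF alg fin card] d_fun_le_card_power[OF alg fin]
      floor_log_le_h_fun[OF alg fin card] h_fun_le_card_power[OF alg fin card]
      bigomega_ln_d_fun[OF alg fin card] exp_bigo_d_fun[OF alg fin card]
      bigomega_ln_h_fun[OF alg fin card] exp_bigo_h_fun[OF alg fin card]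
      weak_galois_bigo_ln_imp_exp_bigomega[OF galois] weak_galois_exp_bigomega_imp_bigo_ln[OF galois]
      weak_galois_bigo_imp_bigomega[OF galois] weak_galois_bigomega_imp_bigo[OF galois]
      weak_galois_bigo_imp_bigomega[OF galois'] weak_galois_bigomega_imp_bigo[OF galois']
      weak_galois_bigo_ln_imp_exp_bigomega[OF galois'] weak_galois_exp_bigomega_imp_bigo_ln[OF galois']
    by blast
qed

end
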